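(* Let $L$ be an interval locale and $A:J\to\mathbf{Mon}(L_{+})$ a small diagram. Then $X=L(\operatorname{Im}(\varinjlim_{j\in J}A(j)))$ (colimit formed in presheaves) is the colimit of $A$ in $\mathbf{Mon}(L_{+})$, and for every $x\in X(i)$, $$\psi_X(x)=\bigvee_{(j,y)}\psi_{A(j)}(y),$$ where the join ranges over all pairs $(j,y)$ with $j\in J$ and $y\in A(j)(s)$ for some $s\in L$ such that $y\mapsto x$ under the composite $A(j)(s)\to\varinjlim_j A(j)(s)\to\operatorname{Im}(\varinjlim_j A(j))(s)\to X(i)$ (and $\psi_{A(j)}(y)$ means $\psi_{A(j)}$ evaluated at the image of $y$ in $A(j)(i)$).
   Context: A locale $L$ is a complete lattice in which finite meets distribute over arbitrary joins, with Grothendieck topology: $\{b_j\le a\}$ covers $a$ iff $\bigvee_j b_j=a$. $L$ is an interval if it is totally ordered and densely ordered. $i$ is the bottom element of $L$; $L_{+}=L\sqcup\{0\}$ with a new bottom $0<i$. $\mathbf{Mon}(L_{+})$ is the category of sheaves $F$ on $L_{+}$ with $F(b)\to F(a)$ injective for all $a\le b$ in $L$; regard $F(c)\subseteq F(i)$ for $c\in L$, and define $\psi_F:F(i)\to L$ by $\psi_F(x)=\sup\{b\in L: x\in F(b)\}$. For a presheaf $E$ on $L_{+}$, $\operatorname{Im}(E)(s)$ is the image of $E(s)\to E(i)$ for $s\in L$, $\operatorname{Im}(E)(0)=\ast$. For a presheaf $F$ on $L_{+}$, $LF(a)=\varprojlim_{0<b<a}F(b)$ for $a\in L$, $a\neq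 i$, $LF(i)=F(i)$, $LF(0)=\ast$. *)

theory Defs
  imports Main "HOL-Library.Option_ord"
begin

(* L_+ is modelled as 'l option: None is the new bottom 0, Some a is a \<in> L.
   The order / Sup / inf on 'l option come from HOL-Library.Option_ord
   (None < Some a, Sup of a family ignoring None). *)

record ('l, 'x) presheaf =
  psec :: "'l option \<Rightarrow> 'x set"
  pres :: "'l option \<Rightarrow> 'l option \<Rightarrow> 'x \<Rightarrow> 'x"

definition is_presheaf :: "('l::complete_linorder, 'x) presheaf \<Rightarrow> bool" where
  "is_presheaf F \<longleftrightarrow>
     (\<forall>s t. s \<le> t \<longrightarrow> (\<forall>x\<in>psec F t. pres F t s x \<in> psec F s)) \<and>
     (\<forall>s. \<forall>x\<in>psec F s. pres F s s x = x) \<and>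
     (\<forall>r s t. r \<le> s \<longrightarrow> s \<le> t \<longrightarrow>
        (\<forall>x\<in>psec F t. pres F s r (pres F t s x) = pres F t r x))"

(* Sheaf condition for the Grothendieck topology: B (\<subseteq> down-set of a) covers a iff Sup B = a. *)
definition is_sheaf :: "('l::complete_linorder, 'x) presheaf \<Rightarrow> bool" where
  "is_sheaf F \<longleftrightarrow> is_presheaf F \<and>
     (\<forall>a B. (\<forall>b\<in>B. b \<le> a) \<and> Sup B = a \<longrightarrow>
        (\<forall>\<phi>. (\<forall>b\<in>B. \<phi> b \<in> psec F b) \<and>
              (\<forall>b\<in>B. \<forall>c\<in>B. pres F b (inf b c) (\<phi> b) = pres F c (inf b c) (\<phi> c))
          \<longrightarrow> (\<exists>!x. x \<in> psec F a \<and> (\<forall>b\<in>B. pres F a b x = \<phi> b))))"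

definition is_mon :: "('l::complete_linorder, 'x) presheaf \<Rightarrow> bool" where
  "is_mon F \<longleftrightarrow> is_sheaf F \<and>
     (\<forall>a b. a \<le> b \<longrightarrow> inj_on (pres F (Some b) (Some a)) (psec F (Some b)))"

(* psi_F(x) = sup { b \<in> L : x \<in> F(b) }, with F(b) regarded as a subset of F(i) via restriction *)
definition psi :: "('l::complete_linorder, 'x) presheaf \<Rightarrow> 'x \<Rightarrow> 'l" where
  "psi F x = Sup {b. \<exists>y\<in>psec F (Some b). pres F (Some b) (Some bot) y = x}"

definition is_nat :: "('l::complete_linorder, 'x) presheaf \<Rightarrow> ('l, 'y) presheaf
                      \<Rightarrow> ('l option \<Rightarrow> 'x \<Rightarrow> 'y) \<Rightarrow> bool" where
  "is_nat F G \<eta> \<longleftrightarrow>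
     (\<forall>s. \<forall>x\<in>psec F s. \<eta> s x \<in> psec G s) \<and>
     (\<forall>s t. s \<le> t \<longrightarrow> (\<forall>x\<in>psec F t. \<eta> s (pres F t s x) = pres G t s (\<eta> t x)))"

record ('j, 'm) cat =
  cobj :: "'j set"
  carr :: "'m set"
  cdom :: "'m \<Rightarrow> 'j"
  ccod :: "'m \<Rightarrow> 'j"
  cid :: "'j \<Rightarrow> 'm"
  ccomp :: "'m \<Rightarrow> 'm \<Rightarrow> 'm"   (* ccomp g f = g \<circ> f *)

definition is_category :: "('j, 'm) cat \<Rightarrow> bool" where
  "is_category C \<longleftrightarrow>
     (\<forall>f\<in>carr C. cdom C f \<in> cobj C \<and> ccod C f \<in> cobj C) \<and>
     (\<forall>j\<in>cobj C. cid C j \<in> carr C \<and> cdom C (cid C j) = j \<and> ccod C (cid C j) = j) \<and>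
     (\<forall>f\<in>carr C. \<forall>g\<in>carr C. ccod C f = cdom C g \<longrightarrow>
        ccomp C g f \<in> carr C \<and> cdom C (ccomp C g f) = cdom C f \<and> ccod C (ccomp C g f) = ccod C g) \<and>
     (\<forall>f\<in>carr C. ccomp C f (cid C (cdom C f)) = f \<and> ccomp C (cid C (ccod C f)) f = f) \<and>
     (\<forall>f\<in>carr C. \<forall>g\<in>carr C. \<forall>h\<in>carr C. ccod C f = cdom C g \<longrightarrow> ccod C g = cdom C h \<longrightarrow>
        ccomp C h (ccomp C g f) = ccomp C (ccomp C h g) f)"

(* a diagram A : J \<rightarrow> Mon(L_+): object part A, arrow part AM (components of natural transformations) *)
definition is_mon_diagram :: "('j, 'm) cat \<Rightarrow> ('j \<Rightarrow> ('l::complete_linorder, 'x) presheaf)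
                              \<Rightarrow> ('m \<Rightarrow> 'l option \<Rightarrow> 'x \<Rightarrow> 'x) \<Rightarrow> bool" where
  "is_mon_diagram C A AM \<longleftrightarrow>
     (\<forall>j\<in>cobj C. is_mon (A j)) \<and>
     (\<forall>f\<in>carr C. is_nat (A (cdom C f)) (A (ccod C f)) (AM f)) \<and>
     (\<forall>j\<in>cobj C. \<forall>s. \<forall>x\<in>psec (A j) s. AM (cid C j) s x = x) \<and>
     (\<forall>f\<in>carr C. \<forall>g\<in>carr C. ccod C f = cdom C g \<longrightarrow>
        (\<forall>s. \<forall>x\<in>psec (A (cdom C f)) s. AM (ccomp C g f) s x = AM g s (AM f s x)))"

definition is_cocone :: "('j, 'm) cat \<Rightarrow> ('j \<Rightarrow> ('l::complete_linorder, 'x) presheaf)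
                         \<Rightarrow> ('m \<Rightarrow> 'l option \<Rightarrow> 'x \<Rightarrow> 'x) \<Rightarrow> ('l, 'y) presheaf
                         \<Rightarrow> ('j \<Rightarrow> 'l option \<Rightarrow> 'x \<Rightarrow> 'y) \<Rightarrow> bool" where
  "is_cocone C A AM Y g \<longleftrightarrow>
     (\<forall>j\<in>cobj C. is_nat (A j) Y (g j)) \<and>
     (\<forall>f\<in>carr C. \<forall>s. \<forall>x\<in>psec (A (cdom C f)) s. g (ccod C f) s (AM f s x) = g (cdom C f) s x)"

definition factors_through :: "('j, 'm) cat \<Rightarrow> ('j \<Rightarrow> ('l::complete_linorder, 'x) presheaf)
     \<Rightarrow> ('l, 'z) presheaf \<Rightarrow> ('j \<Rightarrow> 'l option \<Rightarrow> 'x \<Rightarrow> 'z)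
     \<Rightarrow> ('l, 'y) presheaf \<Rightarrow> ('j \<Rightarrow> 'l option \<Rightarrow> 'x \<Rightarrow> 'y)
     \<Rightarrow> ('l option \<Rightarrow> 'z \<Rightarrow> 'y) \<Rightarrow> bool" where
  "factors_through C A X \<iota> Y g u \<longleftrightarrow> is_nat X Y u \<and>
     (\<forall>j\<in>cobj C. \<forall>s. \<forall>y\<in>psec (A j) s. u s (\<iota> j s y) = g j s y)"

definition colim_step :: "('j, 'm) cat \<Rightarrow> ('j \<Rightarrow> ('l, 'x) presheaf)
     \<Rightarrow> ('m \<Rightarrow> 'l option \<Rightarrow> 'x \<Rightarrow> 'x) \<Rightarrow> 'l option \<Rightarrow> (('j \<times> 'x) \<times> ('j \<times> 'x)) set" where
  "colim_step C A AM s = {((cdom C f, y), (ccod C f, AM f s y)) | f y.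
       f \<in> carr C \<and> y \<in> psec (A (cdom C f)) s}"

definition colim_rel :: "('j, 'm) cat \<Rightarrow> ('j \<Rightarrow> ('l, 'x) presheaf)
     \<Rightarrow> ('m \<Rightarrow> 'l option \<Rightarrow> 'x \<Rightarrow> 'x) \<Rightarrow> 'l option \<Rightarrow> (('j \<times> 'x) \<times> ('j \<times> 'x)) set" where
  "colim_rel C A AM s = (colim_step C A AM s \<union> (colim_step C A AM s)\<inverse>)\<^sup>*"

definition colim_inj :: "('j, 'm) cat \<Rightarrow> ('j \<Rightarrow> ('l, 'x) presheaf)
     \<Rightarrow> ('m \<Rightarrow> 'l option \<Rightarrow> 'x \<Rightarrow> 'x) \<Rightarrow> 'j \<Rightarrow> 'l option \<Rightarrow> 'x \<Rightarrow> ('j \<times> 'x) set" where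
  "colim_inj C A AM j s y = colim_rel C A AM s `` {(j, y)}"

definition colim_psh :: "('j, 'm) cat \<Rightarrow> ('j \<Rightarrow> ('l, 'x) presheaf)
     \<Rightarrow> ('m \<Rightarrow> 'l option \<Rightarrow> 'x \<Rightarrow> 'x) \<Rightarrow> ('l, ('j \<times> 'x) set) presheaf" where
  "colim_psh C A AM =
     \<lparr> psec = (\<lambda>s. {colim_inj C A AM j s y | j y. j \<in> cobj C \<and> y \<in> psec (A j) s}),
       pres = (\<lambda>t s e. let p = (SOME p. p \<in> e)
                        in colim_inj C A AM (fst p) s (pres (A (fst p)) t s (snd p))) \<rparr>"

definition Im :: "('l::complete_linorder, 'e) presheaf \<Rightarrow> ('l, 'e) presheaf" where
  "Im E = \<lparr> psec = (\<lambda>s. case s of None \<Rightarrow> {undefined}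
                                | Some a \<Rightarrow> pres E (Some a) (Some bot) ` psec E (Some a)),
            pres = (\<lambda>t s z. if s = None then undefined else z) \<rparr>"

definition im_proj :: "('l::complete_linorder, 'e) presheaf \<Rightarrow> 'l option \<Rightarrow> 'e \<Rightarrow> 'e" where
  "im_proj E s x = (case s of None \<Rightarrow> undefined | Some a \<Rightarrow> pres E (Some a) (Some bot) x)"

(* ---- the functor L: LF(a) = lim_{0<b<a} F(b) (a \<noteq> i), LF(i) = F(i), LF(0) = * ----
   An element of LF(a), a \<noteq> i, is a compatible family \<phi> indexed by {b \<in> L. b < a}
   (undefined outside); an element x of LF(i) = F(i) is encoded as the family
   concentrated at i with value x. *)
definition Lsh :: "('l::complete_linorder, 'e) presheaf \<Rightarrow> ('l, 'l \<Rightarrow> 'e) presheaf" where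
  "Lsh F = \<lparr> psec = (\<lambda>s. case s of None \<Rightarrow> {\<lambda>_. undefined}
       | Some a \<Rightarrow> (if a = bot
            then {(\<lambda>b. if b = bot then x else undefined) | x. x \<in> psec F (Some bot)}
            else {\<phi>. (\<forall>b. b < a \<longrightarrow> \<phi> b \<in> psec F (Some b)) \<and>
                     (\<forall>b c. b \<le> c \<longrightarrow> c < a \<longrightarrow> pres F (Some c) (Some b) (\<phi> c) = \<phi> b) \<and>
                     (\<forall>b. \<not> b < a \<longrightarrow> \<phi> b = undefined)})),
     pres = (\<lambda>t s \<phi>. case s of None \<Rightarrow> (\<lambda>_. undefined)
       | Some c \<Rightarrow> (if c = bot then (\<lambda>b. if b = bot then \<phi> bot else undefined)
                    else (\<lambda>b. if b < c then \<phi> b else undefined))) \<rparr>"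

definition unitL :: "('l::complete_linorder, 'e) presheaf \<Rightarrow> 'l option \<Rightarrow> 'e \<Rightarrow> ('l \<Rightarrow> 'e)" where
  "unitL F s x = (case s of None \<Rightarrow> (\<lambda>_. undefined)
       | Some a \<Rightarrow> (if a = bot then (\<lambda>b. if b = bot then x else undefined)
                    else (\<lambda>b. if b < a then pres F (Some a) (Some b) x else undefined)))"

definition Xcolim :: "('j, 'm) cat \<Rightarrow> ('j \<Rightarrow> ('l::complete_linorder, 'x) presheaf)
     \<Rightarrow> ('m \<Rightarrow> 'l option \<Rightarrow> 'x \<Rightarrow> 'x) \<Rightarrow> ('l, 'l \<Rightarrow> ('j \<times> 'x) set) presheaf" where
  "Xcolim C A AM = Lsh (Im (colim_psh C A AM))"

definition Xcocone :: "('j, 'm) cat \<Rightarrow> ('j \<Rightarrow> ('l::complete_linorder, 'x) presheaf)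
     \<Rightarrow> ('m \<Rightarrow> 'l option \<Rightarrow> 'x \<Rightarrow> 'x) \<Rightarrow> 'j \<Rightarrow> 'l option \<Rightarrow> 'x \<Rightarrow> ('l \<Rightarrow> ('j \<times> 'x) set)" where
  "Xcocone C A AM j s y =
     unitL (Im (colim_psh C A AM)) s (im_proj (colim_psh C A AM) s (colim_inj C A AM j s y))"

end

theory Submission
  imports Defs
begin

text \<open>The image presheaf Im(colim A) has identity restrictions: Im(b) is the set of classes at
  the bottom i of elements living at level b, and it decreases in b. So a section of
  X = L(Im) over a is a single class lying in Im(b) for all b < a, and the restrictions of X are
  injective; gluing in X is trivial because the members of a compatible family all carry the same
  class. A cocone g into Y in Mon(L_+) induces a map on Im(i); a class in Im(b) for every b < a lifts
  to Y(b) for every b < a, and since L is dense these levels cover a, so the lifts glue to a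
  section over a. Injectivity of the restrictions of Y to i gives naturality and uniqueness.
  Finally, psi_X(x) is the supremum of the levels b with x in Im(c) for all c < b, and by density
  this is the supremum of the levels at which x has a representative.\<close>

lemma presheaf_pres_mem:
  "is_presheaf F \<Longrightarrow> s \<le> t \<Longrightarrow> x \<in> psec F t \<Longrightarrow> pres F t s x \<in> psec F s"
  by (auto simp: is_presheaf_def)

lemma presheaf_pres_id: "is_presheaf F \<Longrightarrow> x \<in> psec F s \<Longrightarrow> pres F s s x = x"
  by (auto simp: is_presheaf_def)

lemma presheaf_pres_comp:
  "is_presheaf F \<Longrightarrow> r \<le> s \<Longrightarrow> s \<le> t \<Longrightarrow> x \<in> psec F t \<Longrightarrow> pres F s r (pres F t s x) = pres F t r x"
  by (auto simp: is_presheaf_def)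

lemma is_nat_mem: "is_nat F G \<eta> \<Longrightarrow> x \<in> psec F s \<Longrightarrow> \<eta> s x \<in> psec G s"
  by (auto simp: is_nat_def)

lemma is_nat_pres:
  "is_nat F G \<eta> \<Longrightarrow> s \<le> t \<Longrightarrow> x \<in> psec F t \<Longrightarrow> \<eta> s (pres F t s x) = pres G t s (\<eta> t x)"
  by (auto simp: is_nat_def)

lemma is_mon_sheaf: "is_mon F \<Longrightarrow> is_sheaf F"
  by (simp add: is_mon_def)

lemma is_mon_presheaf: "is_mon F \<Longrightarrow> is_presheaf F"
  by (simp add: is_mon_def is_sheaf_def)

lemma sheaf_glue:
  assumes "is_sheaf F" "\<forall>b\<in>B. b \<le> a" "Sup B = a" "\<forall>b\<in>B. \<phi> b \<in> psec F b"
    and "\<forall>b\<in>B. \<forall>c\<in>B. pres F b (inf b c) (\<phi> b) = pres F c (inf b c) (\<phi> c)"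
  shows "\<exists>x\<in>psec F a. \<forall>b\<in>B. pres F a b x = \<phi> b"
proof -
  have "\<exists>!x. x \<in> psec F a \<and> (\<forall>b\<in>B. pres F a b x = \<phi> b)"
    using assms unfolding is_sheaf_def by (elim conjE allE[of _ a] allE[of _ B] allE[of _ \<phi>]) simp
  then show ?thesis
    by blast
qed

text \<open>The empty family covers the new bottom 0, so a sheaf has exactly one section there.\<close>
lemma sheaf_psec_None:
  assumes "is_sheaf F"
  shows "\<exists>y. psec F None = {y}"
proof -
  have "\<exists>!x. x \<in> psec F None"
    using assms unfolding is_sheaf_def
    by (auto simp: bot_option_def dest!: spec[of _ None] spec[of _ "{}"])
  then show ?thesis by blast
qed

lemma mon_restrict_bot_inj:
  assumes "is_mon F" "v \<in> psec F (Some a)" "v' \<in> psec F (Some a)"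
    and "pres F (Some a) (Some bot) v = pres F (Some a) (Some bot) v'"
  shows "v = v'"
  using assms unfolding is_mon_def by (meson bot_least inj_onD)

text \<open>An element w of Im(i) lying in every Im(b), b < a, is encoded in L(Im)(a) as the constant
  family const_family a w; sections_below F a is the set of such w (membership at b = bot only
  matters for a = bot).\<close>
definition const_family :: "'l::complete_linorder \<Rightarrow> 'e \<Rightarrow> 'l \<Rightarrow> 'e" where
  "const_family a w = (\<lambda>b. if b < a \<or> b = bot then w else undefined)"

definition sections_below :: "('l::complete_linorder, 'e) presheaf \<Rightarrow> 'l \<Rightarrow> 'e set" where
  "sections_below F a = {w. \<forall>b. b < a \<or> b = bot \<longrightarrow> w \<in> psec F (Some b)}"

lemma const_family_bot [simp]: "const_family a w bot = w"
  by (simp add: const_family_def)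

lemma const_family_inj: "const_family a w = const_family a w' \<Longrightarrow> w = w'"
  by (metis const_family_bot)

lemma sections_below_antimono: "c \<le> a \<Longrightarrow> sections_below F a \<subseteq> sections_below F c"
  unfolding sections_below_def using order_less_le_trans by blast

lemma sections_below_bot: "sections_below F bot = psec F (Some bot)"
  by (auto simp: sections_below_def)

lemma sections_below_subset: "b < a \<Longrightarrow> sections_below F a \<subseteq> psec F (Some b)"
  by (auto simp: sections_below_def)

lemma sections_below_Sup:
  assumes "S \<noteq> {}" "\<forall>b\<in>S. w \<in> sections_below F b"
  shows "w \<in> sections_below F (Sup S)"
  unfolding sections_below_def
proof (intro CollectI allI impI)
  fix d assume "d < Sup S \<or> d = bot"
  then obtain b where "b \<in> S" "d < b \<or> d = bot"
    using assms(1) less_Sup_iff by blast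
  then show "w \<in> psec F (Some d)"
    using assms(2) unfolding sections_below_def by blast
qed

lemma Lsh_psec_None: "psec (Lsh F) None = {\<lambda>_. undefined}"
  by (simp add: Lsh_def)

lemma Lsh_pres_None: "pres (Lsh F) t None \<phi> = (\<lambda>_. undefined)"
  by (simp add: Lsh_def)

lemma Lsh_pres_const_family:
  "c \<le> a \<Longrightarrow> pres (Lsh F) t (Some c) (const_family a w) = const_family c w"
  by (auto simp: Lsh_def const_family_def bot_unique intro!: ext
      dest: order_less_le_trans bot.not_eq_extremum[THEN iffD1])

text \<open>When F has identity restrictions, as an image presheaf does, compatible families are constant.\<close>
lemma Lsh_psec_Some:
  assumes "\<And>t b z. pres F t (Some b) z = z"
  shows "psec (Lsh F) (Some a) = const_family a ` sections_below F a"
proof (cases "a = bot")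
  case True
  then show ?thesis
    by (auto simp: Lsh_def const_family_def sections_below_bot)
next
  case False
  then have bot_less: "bot < a"
    using bot.not_eq_extremum by blast
  have "\<phi> \<in> psec (Lsh F) (Some a) \<longleftrightarrow> \<phi> \<in> const_family a ` sections_below F a" for \<phi>
  proof
    assume \<phi>: "\<phi> \<in> psec (Lsh F) (Some a)"
    then have "\<phi> = const_family a (\<phi> bot)"
      using False bot_less by (auto simp: Lsh_def assms const_family_def)
    moreover have "\<phi> bot \<in> sections_below F a"
      using \<phi> False bot_less by (auto simp: Lsh_def assms sections_below_def) (metis bot_least)
    ultimately show "\<phi> \<in> const_family a ` sections_below F a"
      by blast
  next
    assume "\<phi> \<in> const_family a ` sections_below F a"
    then show "\<phi> \<in> psec (Lsh F) (Some a)"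
      using False bot_less
      by (auto simp: Lsh_def assms const_family_def sections_below_def dest: order_le_less_trans)
  qed
  then show ?thesis
    by blast
qed

lemma unitL_Some:
  assumes "\<And>t b z. pres F t (Some b) z = z"
  shows "unitL F (Some a) v = const_family a v"
  using assms by (auto simp: unitL_def const_family_def bot.not_eq_extremum intro!: ext)

lemma Sup_option_eq_SomeD:
  assumes "Sup B = Some a"
  shows "Option.these B \<noteq> {} \<and> Sup (Option.these B) = a"
proof -
  have "\<not> (B = {} \<or> B = {None})"
    using assms by (auto simp: bot_option_def)
  then show ?thesis
    using assms by (simp add: Sup_option_def Option.these_empty_eq)
qed

context
  fixes F :: "('l::complete_linorder, 'e) presheaf"
  assumes pres_Some: "\<And>t b z. pres F t (Some b) z = z"
begin

lemma Lsh_psec_SomeE: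
  assumes "\<phi> \<in> psec (Lsh F) (Some a)"
  obtains w where "w \<in> sections_below F a" "\<phi> = const_family a w"
  using assms Lsh_psec_Some[OF pres_Some] by blast

lemma const_family_mem_Lsh:
  "const_family a w \<in> psec (Lsh F) (Some a) \<longleftrightarrow> w \<in> sections_below F a"
  by (auto simp: Lsh_psec_Some[OF pres_Some] dest: const_family_inj)

lemma Lsh_is_presheaf: "is_presheaf (Lsh F)"
  unfolding is_presheaf_def
proof (intro conjI allI impI ballI)
  fix s t \<phi> assume "s \<le> t" "\<phi> \<in> psec (Lsh F) t"
  then show "pres (Lsh F) t s \<phi> \<in> psec (Lsh F) s"
    by (cases s; cases t)
      (auto simp: Lsh_psec_None Lsh_pres_None Lsh_pres_const_family const_family_mem_Lsh
        intro: sections_below_antimono[THEN subsetD] elim!: Lsh_psec_SomeE)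
next
  fix s \<phi> assume "\<phi> \<in> psec (Lsh F) s"
  then show "pres (Lsh F) s s \<phi> = \<phi>"
    by (cases s) (auto simp: Lsh_psec_None Lsh_pres_None Lsh_pres_const_family elim!: Lsh_psec_SomeE)
next
  fix r s t \<phi> assume "r \<le> s" "s \<le> t" "\<phi> \<in> psec (Lsh F) t"
  then show "pres (Lsh F) s r (pres (Lsh F) t s \<phi>) = pres (Lsh F) t r \<phi>"
    by (cases r; cases s; cases t)
      (auto simp: Lsh_pres_None Lsh_pres_const_family elim!: Lsh_psec_SomeE)
qed

lemma Lsh_pres_inj: "a \<le> b \<Longrightarrow> inj_on (pres (Lsh F) (Some b) (Some a)) (psec (Lsh F) (Some b))"
  by (auto intro!: inj_onI simp: Lsh_pres_const_family elim!: Lsh_psec_SomeE dest: const_family_inj)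

lemma Lsh_compatible_family_const:
  assumes b0: "Some b0 \<in> B"
    and sec: "\<forall>b\<in>B. \<phi> b \<in> psec (Lsh F) b"
    and compat: "\<forall>b\<in>B. \<forall>c\<in>B. pres (Lsh F) b (inf b c) (\<phi> b) = pres (Lsh F) c (inf b c) (\<phi> c)"
  obtains w where "\<And>b. Some b \<in> B \<Longrightarrow> \<phi> (Some b) = const_family b w \<and> w \<in> sections_below F b"
proof -
  from sec b0 have "\<phi> (Some b0) \<in> psec (Lsh F) (Some b0)"
    by blast
  then obtain w where w: "\<phi> (Some b0) = const_family b0 w"
    by (rule Lsh_psec_SomeE)
  have "\<phi> (Some b) = const_family b w \<and> w \<in> sections_below F b" if b: "Some b \<in> B" for b
  proof -
    from sec b have "\<phi> (Some b) \<in> psec (Lsh F) (Some b)"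
      by blast
    then obtain w' where w': "w' \<in> sections_below F b" "\<phi> (Some b) = const_family b w'"
      by (rule Lsh_psec_SomeE)
    have "pres (Lsh F) (Some b) (Some (min b b0)) (\<phi> (Some b))
        = pres (Lsh F) (Some b0) (Some (min b b0)) (\<phi> (Some b0))"
      using compat b b0 by (metis inf_Some inf_min)
    then have "const_family (min b b0) w' = const_family (min b b0) w"
      using w w' by (simp add: Lsh_pres_const_family)
    then show ?thesis
      using w' by (metis const_family_inj)
  qed
  then show thesis
    by (rule that)
qed

lemma Lsh_is_sheaf: "is_sheaf (Lsh F)"
  unfolding is_sheaf_def
proof (intro conjI Lsh_is_presheaf allI impI)
  fix a :: "'l option" and B \<phi>
  assume cover: "(\<forall>b\<in>B. b \<le> a) \<and> Sup B = a"
    and fam: "(\<forall>b\<in>B. \<phi> b \<in> psec (Lsh F) b) \<and>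
      (\<forall>b\<in>B. \<forall>c\<in>B. pres (Lsh F) b (inf b c) (\<phi> b) = pres (Lsh F) c (inf b c) (\<phi> c))"
  show "\<exists>!x. x \<in> psec (Lsh F) a \<and> (\<forall>b\<in>B. pres (Lsh F) a b x = \<phi> b)"
  proof (cases a)
    case None
    then have "B \<subseteq> {None}"
      using cover less_eq_option_None_is_None by blast
    then have "b = None \<and> \<phi> b = (\<lambda>_. undefined)" if "b \<in> B" for b
      using that fam Lsh_psec_None[of F] by (metis singletonD subsetD)
    then show ?thesis
      using None by (force simp: Lsh_psec_None Lsh_pres_None)
  next
    case (Some a')
    then obtain b0 where b0: "Some b0 \<in> B" and Sup_these: "Sup (Option.these B) = a'"
      using Sup_option_eq_SomeD cover by (fastforce simp: in_these_eq)
    obtain w where w: "\<And>b. Some b \<in> B \<Longrightarrow> \<phi> (Some b) = const_family b w \<and> w \<in> sections_below F b"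
      using Lsh_compatible_family_const[OF b0] fam by blast
    have "Option.these B \<noteq> {}" "\<forall>b\<in>Option.these B. w \<in> sections_below F b"
      using b0 w by (auto simp: in_these_eq)
    then have "w \<in> sections_below F a'"
      using sections_below_Sup Sup_these by metis
    moreover have "pres (Lsh F) a b (const_family a' w) = \<phi> b" if "b \<in> B" for b
      using that cover fam Some w
      by (cases b) (auto simp: Lsh_pres_None Lsh_psec_None Lsh_pres_const_family)
    moreover have "x = const_family a' w"
      if x: "x \<in> psec (Lsh F) a" and x_b0: "pres (Lsh F) a (Some b0) x = \<phi> (Some b0)" for x
    proof -
      obtain w' where x': "x = const_family a' w'"
        using x Some by (auto elim: Lsh_psec_SomeE)
      have "b0 \<le> a'"
        using cover b0 Some by auto
      then have "const_family b0 w' = const_family b0 w"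
        using x_b0 x' Some w[OF b0] by (simp add: Lsh_pres_const_family)
      then show ?thesis
        using x' const_family_inj by metis
    qed
    ultimately show ?thesis
      using Some b0 by (metis const_family_mem_Lsh)
  qed
qed

lemma Lsh_is_mon: "is_mon (Lsh F)"
  unfolding is_mon_def using Lsh_is_sheaf Lsh_pres_inj by blast

lemma psi_Lsh_const_family:
  "psi (Lsh F) (const_family bot w) = Sup {b. w \<in> sections_below F b}"
proof -
  have "(\<exists>\<phi>\<in>psec (Lsh F) (Some b). pres (Lsh F) (Some b) (Some bot) \<phi> = const_family bot w)
        \<longleftrightarrow> w \<in> sections_below F b" for b
    by (auto simp: Lsh_pres_const_family elim!: Lsh_psec_SomeE dest: const_family_inj)
      (metis bot_least const_family_mem_Lsh Lsh_pres_const_family)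
  then show ?thesis
    by (simp add: psi_def)
qed

end

lemma nat_into_mon_eqI:
  assumes X: "is_presheaf X" and Y: "is_mon Y"
    and u: "is_nat X Y u" and u': "is_nat X Y u'"
    and eq_bot: "\<And>z. z \<in> psec X (Some bot) \<Longrightarrow> u (Some bot) z = u' (Some bot) z"
    and z: "z \<in> psec X s"
  shows "u s z = u' s z"
proof (cases s)
  case None
  then show ?thesis
    using sheaf_psec_None[OF is_mon_sheaf[OF Y]] z is_nat_mem[OF u] is_nat_mem[OF u'] by force
next
  case (Some a)
  have "pres Y (Some a) (Some bot) (u (Some a) z) = pres Y (Some a) (Some bot) (u' (Some a) z)"
    using z Some eq_bot presheaf_pres_mem[OF X] is_nat_pres[OF u] is_nat_pres[OF u']
    by (metis bot_least less_eq_option_Some)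
  then show ?thesis
    using mon_restrict_bot_inj[OF Y] is_nat_mem[OF u] is_nat_mem[OF u'] z Some by blast
qed

definition section_over :: "('l::complete_linorder, 'y) presheaf \<Rightarrow> 'l \<Rightarrow> 'y \<Rightarrow> 'y" where
  "section_over Y a y = (THE v. v \<in> psec Y (Some a) \<and> pres Y (Some a) (Some bot) v = y)"

lemma section_over_eq:
  assumes "is_mon Y" "v \<in> psec Y (Some a)" "pres Y (Some a) (Some bot) v = y"
  shows "section_over Y a y = v"
  unfolding section_over_def
proof (rule the_equality)
  fix v' assume "v' \<in> psec Y (Some a) \<and> pres Y (Some a) (Some bot) v' = y"
  then show "v' = v"
    using mon_restrict_bot_inj[OF assms(1), of v' a v] assms(2,3) by simp
qed (use assms in simp)

lemma section_over:
  assumes "is_mon Y" "\<exists>v\<in>psec Y (Some a). pres Y (Some a) (Some bot) v = y"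
  shows "section_over Y a y \<in> psec Y (Some a) \<and> pres Y (Some a) (Some bot) (section_over Y a y) = y"
proof -
  obtain v where "v \<in> psec Y (Some a)" "pres Y (Some a) (Some bot) v = y"
    using assms(2) by blast
  then show ?thesis
    using section_over_eq[OF assms(1)] by simp
qed

lemma mon_pres_eqI:
  assumes Y: "is_mon Y" and v: "v \<in> psec Y (Some b)" and v': "v' \<in> psec Y (Some c)"
    and m: "m \<le> b" "m \<le> c"
    and eq: "pres Y (Some b) (Some bot) v = pres Y (Some c) (Some bot) v'"
  shows "pres Y (Some b) (Some m) v = pres Y (Some c) (Some m) v'"
proof (rule mon_restrict_bot_inj[OF Y])
  have Yp: "is_presheaf Y"
    using Y by (rule is_mon_presheaf)
  show "pres Y (Some b) (Some m) v \<in> psec Y (Some m)" "pres Y (Some c) (Some m) v' \<in> psec Y (Some m)"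
    using presheaf_pres_mem[OF Yp] v v' m by simp_all
  show "pres Y (Some m) (Some bot) (pres Y (Some b) (Some m) v) =
      pres Y (Some m) (Some bot) (pres Y (Some c) (Some m) v')"
    using presheaf_pres_comp[OF Yp] v v' m eq by simp
qed

text \<open>This is where density of L enters: the elements below a cover a.\<close>
lemma mon_section_from_below:
  fixes Y :: "('l::{complete_linorder, dense_linorder}, 'y) presheaf"
  assumes Y: "is_mon Y" and bot_less: "bot < a"
    and below: "\<And>c. c < a \<Longrightarrow> \<exists>v\<in>psec Y (Some c). pres Y (Some c) (Some bot) v = y"
  shows "\<exists>v\<in>psec Y (Some a). pres Y (Some a) (Some bot) v = y"
proof -
  define B where "B = Some ` {..<a}"
  define \<psi> where "\<psi> b = section_over Y (the b) y" for b
  have \<psi>: "\<psi> (Some c) \<in> psec Y (Some c) \<and> pres Y (Some c) (Some bot) (\<psi> (Some c)) = y"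
    if "c < a" for c
    using section_over[OF Y below[OF that]] by (simp add: \<psi>_def)
  have "{..<a} \<noteq> {}"
    using bot_less by auto
  then have Sup_B: "Sup B = Some a"
    using Some_Sup[of "{..<a}"] by (simp add: B_def)
  have compat: "\<forall>b\<in>B. \<forall>c\<in>B. pres Y b (inf b c) (\<psi> b) = pres Y c (inf b c) (\<psi> c)"
  proof (intro ballI)
    fix b c assume "b \<in> B" "c \<in> B"
    then obtain b' c' where bc: "b = Some b'" "c = Some c'" "b' < a" "c' < a"
      by (auto simp: B_def)
    have "pres Y (Some b') (Some bot) (\<psi> (Some b')) = pres Y (Some c') (Some bot) (\<psi> (Some c'))"
      using \<psi> bc(3,4) by simp
    then have "pres Y (Some b') (Some (inf b' c')) (\<psi> (Some b'))
        = pres Y (Some c') (Some (inf b' c')) (\<psi> (Some c'))"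
      using \<psi> bc(3,4) by (blast intro: mon_pres_eqI[OF Y] inf_le1 inf_le2)
    then show "pres Y b (inf b c) (\<psi> b) = pres Y c (inf b c) (\<psi> c)"
      using bc by simp
  qed
  have "\<forall>b\<in>B. b \<le> Some a" "\<forall>b\<in>B. \<psi> b \<in> psec Y b"
    using \<psi> by (auto simp: B_def)
  then obtain v where v: "v \<in> psec Y (Some a)" "\<forall>b\<in>B. pres Y (Some a) b v = \<psi> b"
    using sheaf_glue[OF is_mon_sheaf[OF Y] _ Sup_B _ compat] by blast
  have "Some bot \<in> B"
    using bot_less by (simp add: B_def)
  with v(2) have "pres Y (Some a) (Some bot) v = \<psi> (Some bot)"
    by blast
  also have "\<dots> = y"
    using \<psi>[OF bot_less] presheaf_pres_id[OF is_mon_presheaf[OF Y]] by metis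
  finally show ?thesis
    using v(1) by blast
qed

lemma mon_section_over_sections_below:
  fixes F :: "('l::{complete_linorder, dense_linorder}, 'e) presheaf" and Y :: "('l, 'y) presheaf"
  assumes Y: "is_mon Y"
    and lift: "\<And>c w. w \<in> psec F (Some c) \<Longrightarrow> \<exists>v\<in>psec Y (Some c). pres Y (Some c) (Some bot) v = G w"
    and w: "w \<in> sections_below F a"
  shows "\<exists>v\<in>psec Y (Some a). pres Y (Some a) (Some bot) v = G w"
proof (cases "a = bot")
  case True
  with w have "w \<in> psec F (Some a)"
    by (simp add: sections_below_bot)
  then show ?thesis
    by (rule lift)
next
  case False
  then have "bot < a"
    by (simp add: bot.not_eq_extremum)
  moreover have "\<exists>v\<in>psec Y (Some c). pres Y (Some c) (Some bot) v = G w" if "c < a" for c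
    using sections_below_subset[of c a F] that w by (intro lift) blast
  ultimately show ?thesis
    by (rule mon_section_from_below[OF Y])
qed

text \<open>Y is a sheaf, so psec Y None is a singleton; over a, the lift of G w is unique because the
  restrictions of Y are injective.\<close>
definition Lsh_extension ::
    "('l::complete_linorder, 'y) presheaf \<Rightarrow> ('e \<Rightarrow> 'y) \<Rightarrow> 'l option \<Rightarrow> ('l \<Rightarrow> 'e) \<Rightarrow> 'y" where
  "Lsh_extension Y G s \<phi> =
    (case s of None \<Rightarrow> the_elem (psec Y None) | Some a \<Rightarrow> section_over Y a (G (\<phi> bot)))"

context
  fixes F :: "('l::{complete_linorder, dense_linorder}, 'e) presheaf" and Y :: "('l, 'y) presheaf"
    and G :: "'e \<Rightarrow> 'y"
  assumes pres_Some: "\<And>t b z. pres F t (Some b) z = z" and Y: "is_mon Y"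
    and lift: "\<And>c w. w \<in> psec F (Some c) \<Longrightarrow> \<exists>v\<in>psec Y (Some c). pres Y (Some c) (Some bot) v = G w"
begin

lemma Lsh_extension_Some:
  assumes "w \<in> sections_below F a"
  shows "Lsh_extension Y G (Some a) (const_family a w) \<in> psec Y (Some a) \<and>
    pres Y (Some a) (Some bot) (Lsh_extension Y G (Some a) (const_family a w)) = G w"
  using section_over[OF Y mon_section_over_sections_below[where G = G, OF Y lift assms]]
  by (simp add: Lsh_extension_def)

lemma Lsh_extension_mem: "\<phi> \<in> psec (Lsh F) s \<Longrightarrow> Lsh_extension Y G s \<phi> \<in> psec Y s"
  using sheaf_psec_None[OF is_mon_sheaf[OF Y]] Lsh_extension_Some
  by (cases s) (auto simp: Lsh_extension_def elim: Lsh_psec_SomeE[OF pres_Some])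

lemma Lsh_extension_nat: "is_nat (Lsh F) Y (Lsh_extension Y G)"
proof -
  have Yp: "is_presheaf Y"
    using Y by (rule is_mon_presheaf)
  have "Lsh_extension Y G s (pres (Lsh F) t s \<phi>) = pres Y t s (Lsh_extension Y G t \<phi>)"
    if st: "s \<le> t" and \<phi>: "\<phi> \<in> psec (Lsh F) t" for s t \<phi>
  proof (cases s)
    case None
    then show ?thesis
      using sheaf_psec_None[OF is_mon_sheaf[OF Y]] presheaf_pres_mem[OF Yp st Lsh_extension_mem[OF \<phi>]]
      by (auto simp: Lsh_extension_def)
  next
    case (Some c)
    with st obtain a where t: "t = Some a" and ca: "c \<le> a"
      by (cases t) auto
    with \<phi> have "\<phi> \<in> psec (Lsh F) (Some a)"
      by simp
    then obtain w where w: "w \<in> sections_below F a" "\<phi> = const_family a w"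
      by (rule Lsh_psec_SomeE[OF pres_Some])
    have "w \<in> sections_below F c"
      using sections_below_antimono[of c a F] ca w(1) by blast
    moreover have "pres Y t s (Lsh_extension Y G t \<phi>) \<in> psec Y (Some c)"
      using presheaf_pres_mem[OF Yp st Lsh_extension_mem[OF \<phi>]] Some by simp
    moreover have "pres Y (Some c) (Some bot) (pres Y t s (Lsh_extension Y G t \<phi>)) = G w"
      using presheaf_pres_comp[OF Yp, of "Some bot" s t] Lsh_extension_Some[OF w(1)] w t Some ca
      by simp
    ultimately show ?thesis
      using Lsh_extension_Some mon_restrict_bot_inj[OF Y] w t Some ca
      by (metis Lsh_pres_const_family)
  qed
  then show ?thesis
    using Lsh_extension_mem by (simp add: is_nat_def)
qed

end

lemma Im_pres_Some: "pres (Im E) t (Some b) z = z"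
  by (simp add: Im_def)

definition colim_induced ::
    "('j, 'm) cat \<Rightarrow> ('j \<Rightarrow> ('l, 'x) presheaf) \<Rightarrow> ('m \<Rightarrow> 'l option \<Rightarrow> 'x \<Rightarrow> 'x)
      \<Rightarrow> ('j \<Rightarrow> 'l option \<Rightarrow> 'x \<Rightarrow> 'y) \<Rightarrow> 'l option \<Rightarrow> ('j \<times> 'x) set \<Rightarrow> 'y" where
  "colim_induced C A AM g s w = (THE v. \<exists>j y. j \<in> cobj C \<and> y \<in> psec (A j) s \<and>
      w = colim_inj C A AM j s y \<and> v = g j s y)"

locale mon_diagram =
  fixes C :: "('j, 'm) cat"
    and A :: "'j \<Rightarrow> ('l::complete_linorder, 'x) presheaf"
    and AM :: "'m \<Rightarrow> 'l option \<Rightarrow> 'x \<Rightarrow> 'x"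
  assumes category: "is_category C"
    and diagram: "is_mon_diagram C A AM"
begin

abbreviation "cl \<equiv> colim_inj C A AM"
abbreviation "X \<equiv> Xcolim C A AM"
abbreviation "Im_colim \<equiv> Im (colim_psh C A AM)"

lemma presheaf_A: "j \<in> cobj C \<Longrightarrow> is_presheaf (A j)"
  using diagram by (auto simp: is_mon_diagram_def is_mon_def is_sheaf_def)

lemma nat_AM: "f \<in> carr C \<Longrightarrow> is_nat (A (cdom C f)) (A (ccod C f)) (AM f)"
  using diagram by (auto simp: is_mon_diagram_def)

lemma dom_cod_in_obj: "f \<in> carr C \<Longrightarrow> cdom C f \<in> cobj C \<and> ccod C f \<in> cobj C"
  using category by (auto simp: is_category_def)

lemma colim_step_restrict:
  assumes "s \<le> t" "(p, q) \<in> colim_step C A AM t"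
  shows "((fst p, pres (A (fst p)) t s (snd p)), (fst q, pres (A (fst q)) t s (snd q)))
    \<in> colim_step C A AM s"
proof -
  obtain f y where f: "f \<in> carr C" "y \<in> psec (A (cdom C f)) t"
    and pq: "p = (cdom C f, y)" "q = (ccod C f, AM f t y)"
    using assms(2) unfolding colim_step_def by blast
  have "pres (A (ccod C f)) t s (AM f t y) = AM f s (pres (A (cdom C f)) t s y)"
    using is_nat_pres[OF nat_AM[OF f(1)] assms(1) f(2)] by simp
  moreover have "pres (A (cdom C f)) t s y \<in> psec (A (cdom C f)) s"
    using presheaf_pres_mem[OF presheaf_A] dom_cod_in_obj f assms(1) by blast
  ultimately show ?thesis
    using f(1) pq unfolding colim_step_def by auto
qed

lemma colim_rel_restrict:
  assumes "s \<le> t" "(p, q) \<in> colim_rel C A AM t"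
  shows "((fst p, pres (A (fst p)) t s (snd p)), (fst q, pres (A (fst q)) t s (snd q)))
    \<in> colim_rel C A AM s"
  using assms(2) unfolding colim_rel_def
proof (induction q rule: rtrancl_induct)
  case (step q q')
  then show ?case
    using colim_step_restrict[OF assms(1)] by (blast intro: rtrancl_into_rtrancl)
qed simp

lemma colim_rel_sym: "(p, q) \<in> colim_rel C A AM s \<Longrightarrow> (q, p) \<in> colim_rel C A AM s"
  unfolding colim_rel_def by (metis sym_Un_converse sym_rtrancl symD)

lemma colim_rel_trans:
  "(p, q) \<in> colim_rel C A AM s \<Longrightarrow> (q, r) \<in> colim_rel C A AM s \<Longrightarrow> (p, r) \<in> colim_rel C A AM s"
  unfolding colim_rel_def by (rule rtrancl_trans)

lemma colim_inj_eqI: "((j, y), (j', y')) \<in> colim_rel C A AM s \<Longrightarrow> cl j s y = cl j' s y'"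
  unfolding colim_inj_def using colim_rel_sym colim_rel_trans by blast

lemma colim_inj_step:
  "f \<in> carr C \<Longrightarrow> y \<in> psec (A (cdom C f)) s \<Longrightarrow> cl (ccod C f) s (AM f s y) = cl (cdom C f) s y"
  by (rule colim_inj_eqI[symmetric]) (auto simp: colim_rel_def colim_step_def)

text \<open>The restriction of the colimit presheaf is defined through an arbitrary representative;
  it is well defined because the generating relation is compatible with restriction.\<close>
lemma colim_psh_pres:
  assumes "s \<le> t"
  shows "pres (colim_psh C A AM) t s (cl j t y) = cl j s (pres (A j) t s y)"
proof -
  define p where "p = (SOME p. p \<in> cl j t y)"
  have "(j, y) \<in> cl j t y"
    by (simp add: colim_inj_def colim_rel_def)
  then have "((j, y), p) \<in> colim_rel C A AM t"
    unfolding p_def colim_inj_def by (metis Image_singleton_iff someI)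
  then have "cl j s (pres (A j) t s y) = cl (fst p) s (pres (A (fst p)) t s (snd p))"
    using colim_rel_restrict[OF assms] colim_inj_eqI by fastforce
  then show ?thesis
    by (simp add: colim_psh_def p_def Let_def)
qed

lemma colim_psh_psec: "psec (colim_psh C A AM) s = {cl j s y | j y. j \<in> cobj C \<and> y \<in> psec (A j) s}"
  by (simp add: colim_psh_def)

lemma Im_colim_psec:
  "psec (Im_colim) (Some b) =
    {cl j (Some bot) (pres (A j) (Some b) (Some bot) y) | j y. j \<in> cobj C \<and> y \<in> psec (A j) (Some b)}"
proof -
  have "psec (Im_colim) (Some b) =
      pres (colim_psh C A AM) (Some b) (Some bot) ` psec (colim_psh C A AM) (Some b)"
    by (simp add: Im_def)
  also have "\<dots> = {pres (colim_psh C A AM) (Some b) (Some bot) (cl j (Some b) y) | j y.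
      j \<in> cobj C \<and> y \<in> psec (A j) (Some b)}"
    unfolding colim_psh_psec by blast
  finally show ?thesis
    by (simp add: colim_psh_pres)
qed

lemma Im_colim_psec_antimono:
  assumes "c \<le> b"
  shows "psec (Im_colim) (Some b) \<subseteq> psec (Im_colim) (Some c)"
proof
  fix w assume "w \<in> psec (Im_colim) (Some b)"
  then obtain j y where j: "j \<in> cobj C" "y \<in> psec (A j) (Some b)"
    and w: "w = cl j (Some bot) (pres (A j) (Some b) (Some bot) y)"
    unfolding Im_colim_psec by blast
  have "pres (A j) (Some b) (Some c) y \<in> psec (A j) (Some c)"
    "w = cl j (Some bot) (pres (A j) (Some c) (Some bot) (pres (A j) (Some b) (Some c) y))"
    using presheaf_pres_mem[OF presheaf_A] presheaf_pres_comp[OF presheaf_A] j w assms by auto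
  then show "w \<in> psec (Im_colim) (Some c)"
    unfolding Im_colim_psec using j(1) by blast
qed

lemma X_is_mon: "is_mon X"
  unfolding Xcolim_def by (rule Lsh_is_mon) (rule Im_pres_Some)

lemma X_psec_SomeE:
  assumes "\<phi> \<in> psec X (Some a)"
  obtains w where "w \<in> sections_below (Im_colim) a" "\<phi> = const_family a w"
  using assms unfolding Xcolim_def by (blast elim: Lsh_psec_SomeE[OF Im_pres_Some])

lemma Xcocone_None: "Xcocone C A AM j None y = (\<lambda>_. undefined)"
  by (simp add: Xcocone_def unitL_def)

lemma Xcocone_Some:
  "Xcocone C A AM j (Some a) y = const_family a (cl j (Some bot) (pres (A j) (Some a) (Some bot) y))"
  by (simp add: Xcocone_def im_proj_def unitL_Some[OF Im_pres_Some] colim_psh_pres)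

lemma Im_colim_psec_sections_below:
  "psec (Im_colim) (Some a) \<subseteq> sections_below (Im_colim) a"
proof
  fix w assume w: "w \<in> psec (Im_colim) (Some a)"
  show "w \<in> sections_below (Im_colim) a"
    unfolding sections_below_def
  proof (intro CollectI allI impI)
    fix b assume "b < a \<or> b = bot"
    then have "b \<le> a"
      by auto
    then show "w \<in> psec (Im_colim) (Some b)"
      using Im_colim_psec_antimono w by blast
  qed
qed

lemma Xcocone_mem:
  assumes "j \<in> cobj C" "y \<in> psec (A j) (Some a)"
  shows "cl j (Some bot) (pres (A j) (Some a) (Some bot) y) \<in> sections_below (Im_colim) a"
proof -
  have "cl j (Some bot) (pres (A j) (Some a) (Some bot) y) \<in> psec (Im_colim) (Some a)"
    unfolding Im_colim_psec using assms by blast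
  then show ?thesis
    using Im_colim_psec_sections_below by blast
qed

lemma X_cocone: "is_cocone C A AM X (Xcocone C A AM)"
  unfolding is_cocone_def
proof (intro conjI ballI allI)
  fix j assume j: "j \<in> cobj C"
  have "Xcocone C A AM j s y \<in> psec X s" if "y \<in> psec (A j) s" for s y
    using that j Xcocone_mem
    by (cases s) (auto simp: Xcocone_None Xcocone_Some Xcolim_def Lsh_psec_None
        const_family_mem_Lsh[OF Im_pres_Some])
  moreover have "Xcocone C A AM j s (pres (A j) t s y) = pres X t s (Xcocone C A AM j t y)"
    if st: "s \<le> t" and y: "y \<in> psec (A j) t" for s t y
  proof (cases s)
    case (Some c)
    with st obtain a where t: "t = Some a" and ca: "c \<le> a"
      by (cases t) auto
    then show ?thesis
      using Some presheaf_pres_comp[OF presheaf_A[OF j], of "Some bot" s t y] st y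
      by (simp add: Xcocone_Some Xcolim_def Lsh_pres_const_family)
  qed (simp add: Xcocone_None Xcolim_def Lsh_pres_None)
  ultimately show "is_nat (A j) X (Xcocone C A AM j)"
    by (simp add: is_nat_def)
next
  fix f s y assume f: "f \<in> carr C" and y: "y \<in> psec (A (cdom C f)) s"
  show "Xcocone C A AM (ccod C f) s (AM f s y) = Xcocone C A AM (cdom C f) s y"
  proof (cases s)
    case (Some a)
    have "pres (A (cdom C f)) s (Some bot) y \<in> psec (A (cdom C f)) (Some bot)"
      using presheaf_pres_mem[OF presheaf_A] dom_cod_in_obj[OF f] y Some by simp
    moreover have "pres (A (ccod C f)) s (Some bot) (AM f s y) = AM f (Some bot) (pres (A (cdom C f)) s (Some bot) y)"
      using is_nat_pres[OF nat_AM[OF f]] y Some by simp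
    ultimately show ?thesis
      using Some colim_inj_step[OF f] by (simp add: Xcocone_Some)
  qed (simp add: Xcocone_None)
qed

lemma Xcocone_nat: "j \<in> cobj C \<Longrightarrow> is_nat (A j) X (Xcocone C A AM j)"
  using X_cocone by (simp add: is_cocone_def)

lemma cocone_colim_rel:
  assumes g: "is_cocone C A AM Y g" and pq: "(p, q) \<in> colim_rel C A AM s"
    and p: "fst p \<in> cobj C" "snd p \<in> psec (A (fst p)) s"
  shows "fst q \<in> cobj C \<and> snd q \<in> psec (A (fst q)) s \<and> g (fst q) s (snd q) = g (fst p) s (snd p)"
  using pq unfolding colim_rel_def
proof (induction q rule: rtrancl_induct)
  case (step q q')
  from step.hyps(2) obtain f y where f: "f \<in> carr C" "y \<in> psec (A (cdom C f)) s"
    and "q = (cdom C f, y) \<and> q' = (ccod C f, AM f s y) \<or> q' = (cdom C f, y) \<and> q = (ccod C f, AM f s y)"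
    unfolding colim_step_def by blast
  moreover have "AM f s y \<in> psec (A (ccod C f)) s" "g (ccod C f) s (AM f s y) = g (cdom C f) s y"
    using is_nat_mem[OF nat_AM] g f unfolding is_cocone_def by blast+
  ultimately show ?case
    using step.IH dom_cod_in_obj[OF f(1)] by auto
qed (use p in simp)

lemma cocone_colim_inj_eq:
  assumes "is_cocone C A AM Y g" "j \<in> cobj C" "y \<in> psec (A j) s" "cl j s y = cl j' s y'"
  shows "g j' s y' = g j s y"
proof -
  have "(j', y') \<in> cl j s y"
    using assms(4) by (simp add: colim_inj_def colim_rel_def)
  then show ?thesis
    using cocone_colim_rel[OF assms(1), of "(j, y)" "(j', y')"] assms(2,3)
    by (simp add: colim_inj_def)
qed


lemma colim_induced_colim_inj:
  assumes "is_cocone C A AM Y g" "j \<in> cobj C" "y \<in> psec (A j) s"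
  shows "colim_induced C A AM g s (cl j s y) = g j s y"
  unfolding colim_induced_def using assms cocone_colim_inj_eq[OF assms(1)]
  by (rule_tac the_equality) blast+

lemma cocone_lift_from_bot:
  assumes g: "is_cocone C A AM Y g" and w: "w \<in> psec (Im_colim) (Some c)"
  shows "\<exists>v\<in>psec Y (Some c). pres Y (Some c) (Some bot) v = colim_induced C A AM g (Some bot) w"
proof -
  obtain j y where j: "j \<in> cobj C" "y \<in> psec (A j) (Some c)"
    and w: "w = cl j (Some bot) (pres (A j) (Some c) (Some bot) y)"
    using w unfolding Im_colim_psec by blast
  have g_nat: "is_nat (A j) Y (g j)"
    using g j(1) by (simp add: is_cocone_def)
  have "pres (A j) (Some c) (Some bot) y \<in> psec (A j) (Some bot)"
    using presheaf_pres_mem[OF presheaf_A[OF j(1)] _ j(2)] by simp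
  then have "pres Y (Some c) (Some bot) (g j (Some c) y) = colim_induced C A AM g (Some bot) w"
    using is_nat_pres[OF g_nat _ j(2)] colim_induced_colim_inj[OF g j(1)] w by simp
  then show ?thesis
    using is_nat_mem[OF g_nat j(2)] by blast
qed
end

locale interval_mon_diagram = mon_diagram C A AM
  for C :: "('j, 'm) cat"
    and A :: "'j \<Rightarrow> ('l::{complete_linorder, dense_linorder}, 'x) presheaf"
    and AM :: "'m \<Rightarrow> 'l option \<Rightarrow> 'x \<Rightarrow> 'x"
begin

lemma X_factors:
  fixes Y :: "('l, 'y) presheaf"
  assumes Y: "is_mon Y" and g: "is_cocone C A AM Y g"
  shows "factors_through C A X (Xcocone C A AM) Y g (Lsh_extension Y (colim_induced C A AM g (Some bot)))"
    (is "factors_through _ _ _ _ _ _ ?u")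
proof -
  note lift = cocone_lift_from_bot[OF g]
  have u: "is_nat X Y ?u"
    unfolding Xcolim_def by (rule Lsh_extension_nat[OF Im_pres_Some Y lift])
  have "?u s (Xcocone C A AM j s y) = g j s y" if j: "j \<in> cobj C" and y: "y \<in> psec (A j) s" for j s y
  proof -
    have g_nat: "is_nat (A j) Y (g j)"
      using g j by (simp add: is_cocone_def)
    have mem: "?u s (Xcocone C A AM j s y) \<in> psec Y s" "g j s y \<in> psec Y s"
      using is_nat_mem[OF u is_nat_mem[OF Xcocone_nat[OF j] y]] is_nat_mem[OF g_nat y] by simp_all
    show ?thesis
    proof (cases s)
      case None
      then show ?thesis
        using sheaf_psec_None[OF is_mon_sheaf[OF Y]] mem by force
    next
      case (Some a)
      have "pres (A j) (Some a) (Some bot) y \<in> psec (A j) (Some bot)"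
        using presheaf_pres_mem[OF presheaf_A[OF j]] y Some by simp
      then have "pres Y (Some a) (Some bot) (?u s (Xcocone C A AM j s y)) = pres Y (Some a) (Some bot) (g j s y)"
        using Lsh_extension_Some[OF Im_pres_Some Y lift Xcocone_mem[OF j]] y Some
          colim_induced_colim_inj[OF g j] is_nat_pres[OF g_nat]
        by (simp add: Xcocone_Some)
      then show ?thesis
        using mon_restrict_bot_inj[OF Y] mem Some by blast
    qed
  qed
  with u show ?thesis
    by (simp add: factors_through_def)
qed

lemma X_factors_unique:
  assumes "is_mon Y"
    and "factors_through C A X (Xcocone C A AM) Y g u"
    and "factors_through C A X (Xcocone C A AM) Y g u'"
    and "z \<in> psec X s"
  shows "u' s z = u s z"
proof (rule nat_into_mon_eqI[OF is_mon_presheaf[OF X_is_mon] assms(1) _ _ _ assms(4)])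
  show "is_nat X Y u'" "is_nat X Y u"
    using assms(2,3) by (simp_all add: factors_through_def)
next
  fix z assume "z \<in> psec X (Some bot)"
  then obtain j y where j: "j \<in> cobj C" "y \<in> psec (A j) (Some bot)"
    and "z = Xcocone C A AM j (Some bot) y"
    by (auto simp: Xcocone_Some sections_below_bot Im_colim_psec presheaf_pres_id[OF presheaf_A]
        elim!: X_psec_SomeE)
  then show "u' (Some bot) z = u (Some bot) z"
    using assms(2,3) by (simp add: factors_through_def)
qed

lemma Sup_sections_below_Im_colim:
  "Sup {b. w \<in> sections_below (Im_colim) b} =
    Sup {psi (A j) (pres (A j) (Some s) (Some bot) y) | j s y.
      j \<in> cobj C \<and> y \<in> psec (A j) (Some s) \<and> cl j (Some bot) (pres (A j) (Some s) (Some bot) y) = w}"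
    (is "Sup ?B = Sup ?S")
proof (rule antisym)
  show "Sup ?B \<le> Sup ?S"
  proof (rule Sup_least, rule dense_le)
    fix b c assume "b \<in> ?B" "c < b"
    then have "w \<in> psec (Im_colim) (Some c)"
      by (simp add: sections_below_def)
    then obtain j y where j: "j \<in> cobj C" "y \<in> psec (A j) (Some c)"
      and w: "w = cl j (Some bot) (pres (A j) (Some c) (Some bot) y)"
      unfolding Im_colim_psec by blast
    have "c \<le> psi (A j) (pres (A j) (Some c) (Some bot) y)"
      unfolding psi_def using j(2) by (intro Sup_upper) blast
    also have "\<dots> \<le> Sup ?S"
      using j w by (intro Sup_upper) blast
    finally show "c \<le> Sup ?S" .
  qed
next
  show "Sup ?S \<le> Sup ?B"
  proof (rule Sup_least)
    fix e assume "e \<in> ?S"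
    then obtain j s y where j: "j \<in> cobj C"
      and e: "e = psi (A j) (pres (A j) (Some s) (Some bot) y)"
      and w: "cl j (Some bot) (pres (A j) (Some s) (Some bot) y) = w"
      by blast
    show "e \<le> Sup ?B"
      unfolding e psi_def
    proof (rule Sup_least)
      fix b assume "b \<in> {b. \<exists>y'\<in>psec (A j) (Some b).
        pres (A j) (Some b) (Some bot) y' = pres (A j) (Some s) (Some bot) y}"
      then obtain y' where "y' \<in> psec (A j) (Some b)"
        and "w = cl j (Some bot) (pres (A j) (Some b) (Some bot) y')"
        using w by auto
      then have "w \<in> psec (Im_colim) (Some b)"
        unfolding Im_colim_psec using j by blast
      then show "b \<le> Sup ?B"
        using Im_colim_psec_sections_below by (blast intro: Sup_upper)
    qed
  qed
qed

lemma psi_X: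
  assumes "x \<in> psec X (Some bot)"
  shows "psi X x =
    Sup {psi (A j) (pres (A j) (Some s) (Some bot) y) | j s y.
      j \<in> cobj C \<and> y \<in> psec (A j) (Some s) \<and>
      pres X (Some s) (Some bot) (Xcocone C A AM j (Some s) y) = x}"
proof -
  obtain w where x: "x = const_family bot w"
    using assms by (blast elim: X_psec_SomeE)
  have "pres X (Some s) (Some bot) (Xcocone C A AM j (Some s) y) = x
      \<longleftrightarrow> cl j (Some bot) (pres (A j) (Some s) (Some bot) y) = w" for j s y
  proof -
    have "pres X (Some s) (Some bot) (Xcocone C A AM j (Some s) y)
        = const_family bot (cl j (Some bot) (pres (A j) (Some s) (Some bot) y))"
      by (simp add: Xcocone_Some Xcolim_def Lsh_pres_const_family)
    then show ?thesis
      using x const_family_inj by metis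
  qed
  then show ?thesis
    unfolding x Xcolim_def psi_Lsh_const_family[OF Im_pres_Some] Sup_sections_below_Im_colim
    by simp
qed

end

theorem lemma28:
  fixes C :: "('j, 'm) cat"
    and A :: "'j \<Rightarrow> ('l::{complete_linorder, dense_linorder}, 'x) presheaf"
    and AM :: "'m \<Rightarrow> 'l option \<Rightarrow> 'x \<Rightarrow> 'x"
  assumes "is_category C"
    and "is_mon_diagram C A AM"
  shows "is_mon (Xcolim C A AM)
       \<and> is_cocone C A AM (Xcolim C A AM) (Xcocone C A AM)
       \<and> (\<forall>(Y :: ('l, 'y) presheaf) g. is_mon Y \<and> is_cocone C A AM Y g \<longrightarrow>
            (\<exists>u. factors_through C A (Xcolim C A AM) (Xcocone C A AM) Y g u \<and>
                 (\<forall>u'. factors_through C A (Xcolim C A AM) (Xcocone C A AM) Y g u' \<longrightarrow>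
                     (\<forall>s. \<forall>z\<in>psec (Xcolim C A AM) s. u' s z = u s z))))
       \<and> (\<forall>x\<in>psec (Xcolim C A AM) (Some bot).
            psi (Xcolim C A AM) x =
              Sup {psi (A j) (pres (A j) (Some s) (Some bot) y) | j s y.
                     j \<in> cobj C \<and> y \<in> psec (A j) (Some s) \<and>
                     pres (Xcolim C A AM) (Some s) (Some bot) (Xcocone C A AM j (Some s) y) = x})"
proof -
  interpret interval_mon_diagram C A AM
    using assms by unfold_locales
  have "\<exists>u. factors_through C A (Xcolim C A AM) (Xcocone C A AM) Y g u \<and>
      (\<forall>u'. factors_through C A (Xcolim C A AM) (Xcocone C A AM) Y g u' \<longrightarrow>
        (\<forall>s. \<forall>z\<in>psec (Xcolim C A AM) s. u' s z = u s z))"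
    if "is_mon Y" "is_cocone C A AM Y g" for Y :: "('l, 'y) presheaf" and g
    using X_factors[OF that] X_factors_unique[OF that(1)] by blast
  then show ?thesis
    using X_is_mon X_cocone psi_X by blast
qed

end
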